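(* Let $\Theta_1,\Theta_2,\ldots$ be independent random variables with $\mathbb P(\Theta_j\le\theta)=\theta/(\theta+j-1)$ for $\theta\ge0$ (convention $0/0=1$), and for fixed $n\ge1$ let $C_{n,\theta}$ be the composition of $n$ whose binary representation is $(1(\Theta_j\le\theta))_{1\le j\le n}$. Then $(C_{n,\theta},\theta\ge0)$ is a (time-inhomogeneous) Markov process whose transition rates are as follows: if at time $\theta$ the state is the composition encoded by a binary sequence (starting with $1$), then each $0$ in that sequence, located at place $j$, switches to $1$ at rate $1/(\theta+j-1)$, independently, and all other transition rates are zero.
   Context: A composition of $n$ is a sequence of positive integers $(n_1,\ldots,n_k)$ with sum $n$. Its binary representation is the length-$n$ 0/1 sequence formed by concatenating the words $10^{n_1-1},10^{n_2-1},\ldots,10^{n_k-1}$ (so the $1$'s sit at places $1,n_1+1,\ldots,n_1+\cdots+n_{k-1}+1$); every 0/1 sequence of length $n$ beginning with $1$ encodes a unique composition of $n$. *)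

theory Defs
  imports "HOL-Probability.Probability"
begin

definition is_composition :: "nat \<Rightarrow> nat list \<Rightarrow> bool" where
  "is_composition n c \<longleftrightarrow> (\<forall>k\<in>set c. 0 < k) \<and> sum_list c = n"

definition binary_rep :: "nat list \<Rightarrow> bool list" where
  "binary_rep c = concat (map (\<lambda>k. True # replicate (k - 1) False) c)"

definition theta_cdf :: "nat \<Rightarrow> real \<Rightarrow> real" where
  "theta_cdf j \<theta> = (if \<theta> + real j - 1 = 0 then 1 else \<theta> / (\<theta> + real j - 1))"

definition comp_proc :: "nat \<Rightarrow> (nat \<Rightarrow> 'a \<Rightarrow> real) \<Rightarrow> real \<Rightarrow> 'a \<Rightarrow> nat list" where
  "comp_proc n \<Theta> \<theta> \<omega> =
     (THE c. is_composition n c \<and> binary_rep c = map (\<lambda>j. \<Theta> j \<omega> \<le> \<theta>) [1..<n+1])"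

definition comp_rate :: "nat \<Rightarrow> real \<Rightarrow> nat list \<Rightarrow> nat list \<Rightarrow> real" where
  "comp_rate n \<theta> c c' =
     (if is_composition n c \<and> is_composition n c' then
        (\<Sum>j\<in>{1..n}. if \<not> binary_rep c ! (j - 1) \<and> binary_rep c' = (binary_rep c)[j - 1 := True]
                      then 1 / (\<theta> + real j - 1) else 0)
      else 0)"

text \<open>Markov property (discrete state space) of a process X indexed by the time set T:
  for times t_1 < ... < t_k < s < t in T, the conditional law of X_t given
  X_{t_1},...,X_{t_k},X_s equals that given X_s (stated multiplicatively, without division).\<close>

definition markov_process_on :: "'a measure \<Rightarrow> real set \<Rightarrow> (real \<Rightarrow> 'a \<Rightarrow> 's) \<Rightarrow> bool" where
  "markov_process_on M T X \<longleftrightarrow>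
     (\<forall>t\<in>T. \<forall>x. {\<omega>\<in>space M. X t \<omega> = x} \<in> sets M) \<and>
     (\<forall>ts xs s t x y. set ts \<subseteq> T \<and> s \<in> T \<and> t \<in> T \<and> sorted_wrt (<) (ts @ [s, t])
        \<and> length xs = length ts \<longrightarrow>
        measure M {\<omega>\<in>space M. (\<forall>i<length ts. X (ts!i) \<omega> = xs!i) \<and> X s \<omega> = x \<and> X t \<omega> = y}
          * measure M {\<omega>\<in>space M. X s \<omega> = x}
        = measure M {\<omega>\<in>space M. (\<forall>i<length ts. X (ts!i) \<omega> = xs!i) \<and> X s \<omega> = x}
          * measure M {\<omega>\<in>space M. X s \<omega> = x \<and> X t \<omega> = y})"

definition has_transition_rates ::
  "'a measure \<Rightarrow> real set \<Rightarrow> (real \<Rightarrow> 'a \<Rightarrow> 's) \<Rightarrow> (real \<Rightarrow> 's \<Rightarrow> 's \<Rightarrow> real) \<Rightarrow> bool" where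
  "has_transition_rates M T X q \<longleftrightarrow>
     (\<forall>\<theta>\<in>T. \<forall>x y. x \<noteq> y \<and> measure M {\<omega>\<in>space M. X \<theta> \<omega> = x} > 0 \<longrightarrow>
        ((\<lambda>h. measure M {\<omega>\<in>space M. X \<theta> \<omega> = x \<and> X (\<theta> + h) \<omega> = y}
               / measure M {\<omega>\<in>space M. X \<theta> \<omega> = x} / h) \<longlongrightarrow> q \<theta> x y) (at_right 0))"

end

theory Submission
  imports Defs
begin

text \<open>
  Almost surely \<open>\<Theta>\<^sub>1 \<le> 0\<close>, so for \<open>\<theta> \<ge> 0\<close> the binary representation of \<open>C\<^sub>n\<^sub>,\<^sub>\<theta>\<close> is the
  vector of indicators \<open>1(\<Theta>\<^sub>j \<le> \<theta>)\<close>, and every finite-dimensional probability of the process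
  factorises over the independent coordinates \<open>j\<close>. Each coordinate \<open>\<theta> \<mapsto> 1(\<Theta>\<^sub>j \<le> \<theta>)\<close> is
  monotone, so its present value determines either its whole past (value 0) or its whole
  future (value 1); this makes every coordinate, and hence the product, Markov. Over
  \<open>[\<theta>, \<theta> + h]\<close> the transition probability is a product of one-coordinate transition
  probabilities, which equal \<open>[a = b] + O(h)\<close> and whose \<open>0 \<rightarrow> 1\<close> entry is
  \<open>h / (\<theta> + j - 1 + h)\<close>; the product rule at \<open>h = 0\<close> yields the stated rates.
\<close>

section \<open>Binary representations of compositions\<close>

abbreviation comp_bit :: "nat list \<Rightarrow> nat \<Rightarrow> bool" where
  "comp_bit c j \<equiv> binary_rep c ! (j - 1)"

lemma binary_rep_Nil [simp]: "binary_rep [] = []"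
  by (simp add: binary_rep_def)

lemma binary_rep_Cons: "binary_rep (k # c) = True # replicate (k - 1) False @ binary_rep c"
  by (simp add: binary_rep_def)

lemma length_binary_rep: "\<forall>k\<in>set c. 0 < k \<Longrightarrow> length (binary_rep c) = sum_list c"
  by (induction c) (auto simp: binary_rep_Cons)

lemma hd_binary_rep: "binary_rep c \<noteq> [] \<Longrightarrow> hd (binary_rep c)"
  by (cases c) (auto simp: binary_rep_Cons)

lemma replicate_False_append_binary_rep:
  "\<exists>k c. (\<forall>i\<in>set c. 0 < i) \<and> w = replicate k False @ binary_rep c"
proof (induction w)
  case Nil
  show ?case
    by (intro exI[of _ 0] exI[of _ "[]"]) auto
next
  case (Cons b w)
  then obtain k c where c: "\<forall>i\<in>set c. 0 < i" and w: "w = replicate k False @ binary_rep c"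
    by blast
  show ?case
  proof (cases b)
    case True
    then show ?thesis
      using c w by (intro exI[of _ 0] exI[of _ "Suc k # c"]) (auto simp: binary_rep_Cons)
  next
    case False
    then show ?thesis
      using c w by (intro exI[of _ "Suc k"] exI[of _ c]) auto
  qed
qed

lemma replicate_False_append_cancel:
  assumes "replicate k False @ u = replicate k' False @ u'"
    and "u \<noteq> [] \<Longrightarrow> hd u" and "u' \<noteq> [] \<Longrightarrow> hd u'"
  shows "k = k' \<and> u = u'"
  using assms
proof (induction k arbitrary: k')
  case 0
  then show ?case by (cases k') auto
next
  case (Suc k)
  then show ?case by (cases k') auto
qed

lemma binary_rep_inj:
  assumes "\<forall>k\<in>set c. 0 < k" "\<forall>k\<in>set c'. 0 < k" "binary_rep c = binary_rep c'"
  shows "c = c'"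
  using assms
proof (induction c arbitrary: c')
  case Nil
  then show ?case by (cases c') (auto simp: binary_rep_Cons)
next
  case (Cons k c)
  then obtain k' d where c': "c' = k' # d"
    by (cases c') (auto simp: binary_rep_Cons)
  have "replicate (k - 1) False @ binary_rep c = replicate (k' - 1) False @ binary_rep d"
    using Cons.prems c' by (simp add: binary_rep_Cons)
  then have "k - 1 = k' - 1 \<and> binary_rep c = binary_rep d"
    using replicate_False_append_cancel hd_binary_rep by blast
  then show ?case
    using Cons.prems Cons.IH[of d] c' by auto
qed

lemma length_binary_rep_composition: "is_composition n c \<Longrightarrow> length (binary_rep c) = n"
  by (simp add: is_composition_def length_binary_rep)

lemma comp_bit_1: "is_composition n c \<Longrightarrow> 1 \<le> n \<Longrightarrow> comp_bit c 1"
  by (cases c) (auto simp: is_composition_def binary_rep_Cons)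

lemma composition_eqI:
  "is_composition n c \<Longrightarrow> is_composition n c' \<Longrightarrow> binary_rep c = binary_rep c' \<Longrightarrow> c = c'"
  using binary_rep_inj by (auto simp: is_composition_def)

lemma ex_composition_binary_rep:
  assumes "w \<noteq> []" "hd w"
  shows "\<exists>c. is_composition (length w) c \<and> binary_rep c = w"
proof -
  obtain k c where c: "\<forall>i\<in>set c. 0 < i" and w: "w = replicate k False @ binary_rep c"
    using replicate_False_append_binary_rep by blast
  have "k = 0"
    using assms w by (cases k) auto
  then show ?thesis
    using c w by (auto simp: is_composition_def length_binary_rep)
qed

lemma all_less_iff_all_atLeastAtMost: "(\<forall>i<n. P i) \<longleftrightarrow> (\<forall>j\<in>{1..n}. P (j - 1 :: nat))"
proof
  show "\<forall>j\<in>{1..n}. P (j - 1)" if P: "\<forall>i<n. P i"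
  proof
    fix j assume "j \<in> {1..n}"
    then have "j - 1 < n" by auto
    then show "P (j - 1)" using P by blast
  qed
next
  assume P: "\<forall>j\<in>{1..n}. P (j - 1)"
  show "\<forall>i<n. P i"
  proof (intro allI impI)
    fix i assume "i < n"
    then show "P i" using P[rule_format, of "Suc i"] by simp
  qed
qed

lemma list_eq_iff_nth_eq_atLeastAtMost:
  "length xs = n \<Longrightarrow> length ys = n \<Longrightarrow> xs = ys \<longleftrightarrow> (\<forall>j\<in>{1..n}. xs ! (j - 1) = ys ! (j - 1))"
  by (simp add: list_eq_iff_nth_eq all_less_iff_all_atLeastAtMost)

lemma eq_list_update_iff_atLeastAtMost:
  assumes "length xs = n" "length ys = n" "k \<in> {1..n}"
  shows "ys = xs[k - 1 := v] \<longleftrightarrow> ys ! (k - 1) = v \<and> (\<forall>j\<in>{1..n}-{k}. xs ! (j - 1) = ys ! (j - 1))"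
proof -
  have upd: "xs[k - 1 := v] ! (j - 1) = (if j = k then v else xs ! (j - 1))" if "j \<in> {1..n}" for j
    using that assms by (auto simp: nth_list_update)
  have "ys = xs[k - 1 := v] \<longleftrightarrow> (\<forall>j\<in>{1..n}. ys ! (j - 1) = xs[k - 1 := v] ! (j - 1))"
    using assms by (simp add: list_eq_iff_nth_eq_atLeastAtMost)
  also have "\<dots> \<longleftrightarrow> (\<forall>j\<in>{1..n}. ys ! (j - 1) = (if j = k then v else xs ! (j - 1)))"
    using upd by simp
  also have "\<dots> \<longleftrightarrow> ys ! (k - 1) = v \<and> (\<forall>j\<in>{1..n}-{k}. xs ! (j - 1) = ys ! (j - 1))"
    using assms(3) by auto
  finally show ?thesis .
qed

lemma comp_proc_eq_iff:
  assumes "1 \<le> n" "\<Theta> 1 \<omega> \<le> \<tau>"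
  shows "comp_proc n \<Theta> \<tau> \<omega> = c \<longleftrightarrow>
    is_composition n c \<and> (\<forall>j\<in>{1..n}. (\<Theta> j \<omega> \<le> \<tau>) = comp_bit c j)"
proof -
  define w where "w = map (\<lambda>j. \<Theta> j \<omega> \<le> \<tau>) [1..<n+1]"
  have len_w: "length w = n"
    by (simp add: w_def)
  have w_nth: "w ! (j - 1) = (\<Theta> j \<omega> \<le> \<tau>)" if "j \<in> {1..n}" for j
    using that by (auto simp: w_def simp del: upt_Suc)
  have "w \<noteq> []"
    using assms len_w by auto
  then have "hd w"
    using assms w_nth[of 1] by (simp add: hd_conv_nth)
  then obtain c0 where c0: "is_composition n c0" "binary_rep c0 = w"
    using ex_composition_binary_rep[OF \<open>w \<noteq> []\<close>] len_w by auto
  have "comp_proc n \<Theta> \<tau> \<omega> = c0"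
    unfolding comp_proc_def w_def[symmetric]
    by (rule the_equality) (simp add: c0, metis c0 composition_eqI)
  then have "comp_proc n \<Theta> \<tau> \<omega> = c \<longleftrightarrow> is_composition n c \<and> binary_rep c = w"
    by (metis c0 composition_eqI)
  also have "\<dots> \<longleftrightarrow> is_composition n c \<and> (\<forall>j\<in>{1..n}. (\<Theta> j \<omega> \<le> \<tau>) = comp_bit c j)"
  proof (rule conj_cong[OF refl])
    assume "is_composition n c"
    then have "binary_rep c = w \<longleftrightarrow> (\<forall>j\<in>{1..n}. comp_bit c j = w ! (j - 1))"
      using len_w by (simp add: list_eq_iff_nth_eq_atLeastAtMost length_binary_rep_composition)
    also have "\<dots> \<longleftrightarrow> (\<forall>j\<in>{1..n}. (\<Theta> j \<omega> \<le> \<tau>) = comp_bit c j)"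
    proof (rule ball_cong[OF refl])
      fix j assume "j \<in> {1..n}"
      then show "(comp_bit c j = w ! (j - 1)) = ((\<Theta> j \<omega> \<le> \<tau>) = comp_bit c j)"
        using w_nth[of j] by auto
    qed
    finally show "binary_rep c = w \<longleftrightarrow> (\<forall>j\<in>{1..n}. (\<Theta> j \<omega> \<le> \<tau>) = comp_bit c j)" .
  qed
  finally show ?thesis .
qed

lemma measurable_comp_proc:
  assumes [measurable]: "\<And>j. 1 \<le> j \<Longrightarrow> \<Theta> j \<in> borel_measurable M"
  shows "comp_proc n \<Theta> \<tau> \<in> M \<rightarrow>\<^sub>M count_space UNIV"
proof -
  have "(\<lambda>\<omega>. map (\<lambda>j. \<Theta> j \<omega> \<le> \<tau>) [1..<n+1]) \<in> M \<rightarrow>\<^sub>M count_space UNIV"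
    unfolding measurable_count_space_eq2_countable
  proof (intro conjI ballI)
    fix w :: "bool list"
    have "{\<omega>\<in>space M. map (\<lambda>j. \<Theta> j \<omega> \<le> \<tau>) [1..<n+1] = w} =
        {\<omega>\<in>space M. length w = n \<and> (\<forall>i\<in>{..<n}. (\<Theta> (Suc i) \<omega> \<le> \<tau>) = w ! i)}"
      by (auto simp: list_eq_iff_nth_eq simp del: upt_Suc)
    also have "\<dots> \<in> sets M"
      by measurable
    finally show "(\<lambda>\<omega>. map (\<lambda>j. \<Theta> j \<omega> \<le> \<tau>) [1..<n+1]) -` {w} \<inter> space M \<in> sets M"
      by (simp add: vimage_def Int_def conj_commute)
  qed simp
  then show ?thesis
    unfolding comp_proc_def by (rule measurable_compose) (rule measurable_count_space)
qed

section \<open>Coordinatewise events\<close>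

definition bit_event :: "nat \<Rightarrow> (real \<times> nat list) set \<Rightarrow> nat \<Rightarrow> real set" where
  "bit_event n P j = {r. \<forall>(\<tau>, c)\<in>P. is_composition n c \<and> (r \<le> \<tau>) = comp_bit c j}"

lemma bit_event_Un: "bit_event n (P \<union> Q) j = bit_event n P j \<inter> bit_event n Q j"
  by (auto simp: bit_event_def)

lemma bit_event_singleton:
  "bit_event n {(\<tau>, c)} j = (if is_composition n c then {r. (r \<le> \<tau>) = comp_bit c j} else {})"
  by (auto simp: bit_event_def)

lemma borel_bit_event: "finite P \<Longrightarrow> bit_event n P j \<in> sets borel"
  unfolding bit_event_def case_prod_beta by measurable

lemma cond_indep_if_decides:
  fixes p :: "'a set \<Rightarrow> 'b::comm_semiring_0"
  assumes "p {} = 0" and "A \<inter> B = {} \<or> B \<subseteq> A \<or> B \<inter> C = {} \<or> B \<subseteq> C"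
  shows "p (A \<inter> B \<inter> C) * p B = p (A \<inter> B) * p (B \<inter> C)"
proof -
  consider "A \<inter> B = {}" | "B \<subseteq> A" | "B \<inter> C = {}" | "B \<subseteq> C"
    using assms(2) by blast
  then show ?thesis
  proof cases
    case 1
    then have "A \<inter> B \<inter> C = {}" by blast
    with 1 show ?thesis using assms(1) by simp
  next
    case 2
    then have "A \<inter> B \<inter> C = B \<inter> C" "A \<inter> B = B" by blast+
    then show ?thesis by (simp add: mult.commute)
  next
    case 3
    then have "A \<inter> B \<inter> C = {}" by blast
    with 3 show ?thesis using assms(1) by simp
  next
    case 4
    then have "A \<inter> B \<inter> C = A \<inter> B" "B \<inter> C = B" by blast+
    then show ?thesis by simp
  qed
qed

text \<open>If \<open>\<Theta>\<^sub>j \<le> s\<close> the bit stays set after time \<open>s\<close>; if \<open>\<Theta>\<^sub>j > s\<close> it was clear at all earlier times.\<close>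

lemma bit_event_decides:
  fixes n j :: nat and s t :: real and x y :: "nat list" and Q :: "(real \<times> nat list) set"
  assumes "\<forall>(\<tau>, c)\<in>Q. \<tau> < s" "s < t"
  defines "A \<equiv> bit_event n Q j" and "B \<equiv> bit_event n {(s, x)} j" and "C \<equiv> bit_event n {(t, y)} j"
  shows "A \<inter> B = {} \<or> B \<subseteq> A \<or> B \<inter> C = {} \<or> B \<subseteq> C"
proof (cases "is_composition n x \<and> comp_bit x j")
  case True
  then have "B = {r. r \<le> s}"
    by (simp add: B_def bit_event_singleton)
  then show ?thesis
    using \<open>s < t\<close> by (auto simp: C_def bit_event_singleton)
next
  case False
  then have B: "B \<subseteq> {r. s < r}"
    by (auto simp: B_def bit_event_singleton)
  have "r \<in> A \<longleftrightarrow> r' \<in> A" if "s < r" "s < r'" for r r'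
    using that assms(1) by (fastforce simp: A_def bit_event_def)
  then have "A \<inter> B = {} \<or> B \<subseteq> A"
    using B by blast
  then show ?thesis by blast
qed

section \<open>Transition probabilities of a single coordinate\<close>

text \<open>The conditional probability \<open>P(1(\<Theta>\<^sub>j \<le> \<theta> + h) = b | 1(\<Theta>\<^sub>j \<le> \<theta>) = a)\<close> for \<open>h > 0\<close>,
  and its derivative at \<open>h = 0\<close>.\<close>

definition bit_transition :: "real \<Rightarrow> nat \<Rightarrow> bool \<Rightarrow> bool \<Rightarrow> real \<Rightarrow> real" where
  "bit_transition \<theta> j a b h =
     (if a then of_bool b
      else if b then h / (\<theta> + real j - 1 + h) else (\<theta> + real j - 1) / (\<theta> + real j - 1 + h))"

definition bit_rate :: "real \<Rightarrow> nat \<Rightarrow> bool \<Rightarrow> bool \<Rightarrow> real" where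
  "bit_rate \<theta> j a b = (if a then 0 else if b then 1 else - 1) / (\<theta> + real j - 1)"

lemma bit_transition_0: "(\<not> a \<Longrightarrow> \<theta> + real j - 1 \<noteq> 0) \<Longrightarrow> bit_transition \<theta> j a b 0 = of_bool (a = b)"
  by (auto simp: bit_transition_def)

lemma has_field_derivative_bit_transition:
  assumes "\<not> a \<Longrightarrow> \<theta> + real j - 1 \<noteq> 0"
  shows "(bit_transition \<theta> j a b has_field_derivative bit_rate \<theta> j a b) (at 0)"
proof -
  have "((\<lambda>h. if a then of_bool b else if b then h / (c + h) else c / (c + h))
      has_field_derivative (if a then 0 else if b then 1 else - 1) / c) (at 0)"
    if "\<not> a \<Longrightarrow> c \<noteq> 0" for c :: real
    using that by (cases a; cases b) (auto intro!: derivative_eq_intros simp: field_simps)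
  from this[of "\<theta> + real j - 1"] assms show ?thesis
    by (simp add: bit_transition_def[abs_def] bit_rate_def)
qed

lemma comp_rate_eq_sum_bit_rate:
  assumes x: "is_composition n x" and y: "is_composition n y" and "x \<noteq> y"
  shows "comp_rate n \<theta> x y = (\<Sum>k\<in>{1..n}. bit_rate \<theta> k (comp_bit x k) (comp_bit y k)
    * (\<Prod>j\<in>{1..n}-{k}. of_bool (comp_bit x j = comp_bit y j)))"
proof -
  have len: "length (binary_rep x) = n" "length (binary_rep y) = n"
    using x y by (simp_all add: length_binary_rep_composition)
  have "comp_rate n \<theta> x y = (\<Sum>k\<in>{1..n}. if \<not> comp_bit x k \<and> binary_rep y = (binary_rep x)[k - 1 := True]
      then 1 / (\<theta> + real k - 1) else 0)"
    using x y by (simp add: comp_rate_def)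
  also have "\<dots> = (\<Sum>k\<in>{1..n}. bit_rate \<theta> k (comp_bit x k) (comp_bit y k)
      * (\<Prod>j\<in>{1..n}-{k}. of_bool (comp_bit x j = comp_bit y j)))"
  proof (rule sum.cong[OF refl])
    fix k assume k: "k \<in> {1..n}"
    have flip_iff: "binary_rep y = (binary_rep x)[k - 1 := True] \<longleftrightarrow>
        comp_bit y k \<and> (\<forall>j\<in>{1..n}-{k}. comp_bit x j = comp_bit y j)"
      using eq_list_update_iff_atLeastAtMost[OF len k] by simp
    show "(if \<not> comp_bit x k \<and> binary_rep y = (binary_rep x)[k - 1 := True]
        then 1 / (\<theta> + real k - 1) else 0) = bit_rate \<theta> k (comp_bit x k) (comp_bit y k)
        * (\<Prod>j\<in>{1..n}-{k}. of_bool (comp_bit x j = comp_bit y j))"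
    proof (cases "\<forall>j\<in>{1..n}-{k}. comp_bit x j = comp_bit y j")
      case True
      have "comp_bit x k \<noteq> comp_bit y k"
      proof
        assume "comp_bit x k = comp_bit y k"
        with True have "\<forall>j\<in>{1..n}. comp_bit x j = comp_bit y j"
          by blast
        then have "binary_rep x = binary_rep y"
          using len by (simp add: list_eq_iff_nth_eq_atLeastAtMost)
        then show False
          using composition_eqI x y \<open>x \<noteq> y\<close> by blast
      qed
      then show ?thesis
        using True flip_iff by (cases "comp_bit x k") (simp_all add: bit_rate_def)
    next
      case False
      then have "binary_rep y \<noteq> (binary_rep x)[k - 1 := True]"
        using flip_iff by blast
      moreover from False have "(\<Prod>j\<in>{1..n}-{k}. of_bool (comp_bit x j = comp_bit y j) :: real) = 0"
        by (auto intro: prod_zero)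
      ultimately show ?thesis
        by simp
    qed
  qed
  finally show ?thesis .
qed

lemma tendsto_prod_bit_transition_comp_rate:
  assumes x: "is_composition n x" and y: "is_composition n y" and "x \<noteq> y" "0 \<le> \<theta>" "1 \<le> n"
  shows "((\<lambda>h. (\<Prod>j\<in>{1..n}. bit_transition \<theta> j (comp_bit x j) (comp_bit y j) h) / h)
    \<longlongrightarrow> comp_rate n \<theta> x y) (at_right 0)"
proof -
  define F where "F h = (\<Prod>j\<in>{1..n}. bit_transition \<theta> j (comp_bit x j) (comp_bit y j) h)" for h
  have nz: "\<theta> + real j - 1 \<noteq> 0" if "j \<in> {1..n}" "\<not> comp_bit x j" for j
    using that comp_bit_1[OF x \<open>1 \<le> n\<close>] \<open>0 \<le> \<theta>\<close> by (cases "j = 1") auto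
  have bt0: "bit_transition \<theta> j (comp_bit x j) (comp_bit y j) 0 = of_bool (comp_bit x j = comp_bit y j)"
    if "j \<in> {1..n}" for j
    using nz[OF that] by (rule bit_transition_0)
  have "\<exists>j\<in>{1..n}. comp_bit x j \<noteq> comp_bit y j"
  proof (rule ccontr)
    assume "\<not> (\<exists>j\<in>{1..n}. comp_bit x j \<noteq> comp_bit y j)"
    then have "binary_rep x = binary_rep y"
      using x y by (simp add: list_eq_iff_nth_eq_atLeastAtMost length_binary_rep_composition)
    then show False
      using composition_eqI x y \<open>x \<noteq> y\<close> by blast
  qed
  then have F0: "F 0 = 0"
    unfolding F_def using bt0 by (intro prod_zero) auto
  have "(F has_field_derivative (\<Sum>k\<in>{1..n}. bit_rate \<theta> k (comp_bit x k) (comp_bit y k)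
      * (\<Prod>j\<in>{1..n}-{k}. bit_transition \<theta> j (comp_bit x j) (comp_bit y j) 0))) (at 0)"
    unfolding F_def[abs_def] using nz
    by (intro has_field_derivative_prod has_field_derivative_bit_transition) blast
  also have "(\<Sum>k\<in>{1..n}. bit_rate \<theta> k (comp_bit x k) (comp_bit y k)
      * (\<Prod>j\<in>{1..n}-{k}. bit_transition \<theta> j (comp_bit x j) (comp_bit y j) 0)) = comp_rate n \<theta> x y"
    unfolding comp_rate_eq_sum_bit_rate[OF x y \<open>x \<noteq> y\<close>]
    by (intro sum.cong prod.cong refl arg_cong2[where f = "(*)"]) (rule bt0, blast)
  finally have "((\<lambda>h. (F h - F 0) / (h - 0)) \<longlongrightarrow> comp_rate n \<theta> x y) (at 0)"
    by (simp only: has_field_derivative_iff)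
  then show ?thesis
    using F0 unfolding F_def[symmetric] by (auto intro: tendsto_mono at_le)
qed

locale composition_process = prob_space M for M :: "'a measure" +
  fixes \<Theta> :: "nat \<Rightarrow> 'a \<Rightarrow> real" and n :: nat
  assumes indep: "indep_vars (\<lambda>_. borel) \<Theta> {1..}"
    and cdf: "\<And>j \<theta>. 1 \<le> j \<Longrightarrow> 0 \<le> \<theta> \<Longrightarrow> prob {\<omega>\<in>space M. \<Theta> j \<omega> \<le> \<theta>} = theta_cdf j \<theta>"
    and n_pos: "1 \<le> n"
begin

lemma borel_measurable_Theta: "1 \<le> j \<Longrightarrow> \<Theta> j \<in> borel_measurable M"
  using indep by (auto simp: indep_vars_def2)

lemma events_Theta: "1 \<le> j \<Longrightarrow> S \<in> sets borel \<Longrightarrow> {\<omega>\<in>space M. \<Theta> j \<omega> \<in> S} \<in> events"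
  using measurable_sets[OF borel_measurable_Theta] by (simp add: vimage_def Int_def conj_commute)

lemma pred_comp_proc [measurable]: "Measurable.pred M (\<lambda>\<omega>. comp_proc n \<Theta> \<tau> \<omega> = c)"
proof -
  have "comp_proc n \<Theta> \<tau> -` {c} \<inter> space M \<in> events"
    by (rule measurable_sets[OF measurable_comp_proc[OF borel_measurable_Theta]]) simp_all
  then show ?thesis
    by (simp add: pred_def vimage_def Int_def conj_commute)
qed

text \<open>\<open>P(\<Theta>\<^sub>1 \<le> 0) = 1\<close> by the convention \<open>0 / 0 = 1\<close> in \<^const>\<open>theta_cdf\<close>.\<close>

lemma AE_Theta_1_nonpos: "AE \<omega> in M. \<Theta> 1 \<omega> \<le> 0"
proof -
  have "AE \<omega> in M. \<omega> \<in> {\<omega>\<in>space M. \<Theta> 1 \<omega> \<le> 0}"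
    by (rule AE_prob_1) (simp add: cdf theta_cdf_def)
  then show ?thesis
    by (rule eventually_mono) auto
qed

text \<open>For \<open>j = 1\<close> both sides vanish; at \<open>\<tau> = 0\<close> this uses \<open>x / 0 = 0\<close>.\<close>

lemma prob_Theta_gt:
  assumes "1 \<le> j" "0 \<le> \<tau>"
  shows "prob {\<omega>\<in>space M. \<tau> < \<Theta> j \<omega>} = (real j - 1) / (\<tau> + real j - 1)"
proof -
  have "{\<omega>\<in>space M. \<Theta> j \<omega> \<le> \<tau>} \<in> events"
    using events_Theta[OF assms(1), of "{..\<tau>}"] by simp
  moreover have "{\<omega>\<in>space M. \<tau> < \<Theta> j \<omega>} = space M - {\<omega>\<in>space M. \<Theta> j \<omega> \<le> \<tau>}"
    by auto
  ultimately have "prob {\<omega>\<in>space M. \<tau> < \<Theta> j \<omega>} = 1 - theta_cdf j \<tau>"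
    using assms by (simp add: prob_compl cdf)
  also have "\<dots> = (real j - 1) / (\<tau> + real j - 1)"
    by (cases "\<tau> + real j - 1 = 0") (simp_all add: theta_cdf_def field_simps)
  finally show ?thesis .
qed

lemma prob_bit_transition:
  assumes "1 \<le> j" "0 \<le> \<theta>" "0 < h"
  shows "prob {\<omega>\<in>space M. (\<Theta> j \<omega> \<le> \<theta>) = a \<and> (\<Theta> j \<omega> \<le> \<theta> + h) = b}
    = bit_transition \<theta> j a b h * prob {\<omega>\<in>space M. (\<Theta> j \<omega> \<le> \<theta>) = a}"
proof (cases a)
  case True
  then have "{\<omega>\<in>space M. (\<Theta> j \<omega> \<le> \<theta>) = a \<and> (\<Theta> j \<omega> \<le> \<theta> + h) = b}
      = (if b then {\<omega>\<in>space M. (\<Theta> j \<omega> \<le> \<theta>) = a} else {})"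
    using \<open>0 < h\<close> by auto
  with True show ?thesis
    by (simp add: bit_transition_def)
next
  case False
  let ?c = "\<theta> + real j - 1" and ?q = "real j - 1"
  have gt: "prob {\<omega>\<in>space M. \<theta> < \<Theta> j \<omega>} = ?q / ?c"
    "prob {\<omega>\<in>space M. \<theta> + h < \<Theta> j \<omega>} = ?q / (?c + h)"
    using prob_Theta_gt[OF \<open>1 \<le> j\<close>, of \<theta>] prob_Theta_gt[OF \<open>1 \<le> j\<close>, of "\<theta> + h"] assms
    by (simp_all add: algebra_simps)
  have "0 < ?c + h" "?c = 0 \<Longrightarrow> ?q = 0"
    using assms by auto
  moreover have "q / c - q / (c + h) = h / (c + h) * (q / c)" "q / (c + h) = c / (c + h) * (q / c)"
    if "0 < c + h" "c = 0 \<Longrightarrow> q = 0" for c q :: real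
    using that by (cases "c = 0", simp_all add: field_simps)+
  ultimately have identities: "?q / ?c - ?q / (?c + h) = h / (?c + h) * (?q / ?c)"
      "?q / (?c + h) = ?c / (?c + h) * (?q / ?c)"
    by blast+
  show ?thesis
  proof (cases b)
    case True
    have "{\<omega>\<in>space M. (\<Theta> j \<omega> \<le> \<theta>) = a \<and> (\<Theta> j \<omega> \<le> \<theta> + h) = b}
        = {\<omega>\<in>space M. \<theta> < \<Theta> j \<omega>} - {\<omega>\<in>space M. \<theta> + h < \<Theta> j \<omega>}"
      using \<open>\<not> a\<close> True \<open>0 < h\<close> by auto
    moreover have "{\<omega>\<in>space M. \<theta> + h < \<Theta> j \<omega>} \<subseteq> {\<omega>\<in>space M. \<theta> < \<Theta> j \<omega>}"
      using \<open>0 < h\<close> by auto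
    moreover have "{\<omega>\<in>space M. \<theta> < \<Theta> j \<omega>} \<in> events" "{\<omega>\<in>space M. \<theta> + h < \<Theta> j \<omega>} \<in> events"
      using events_Theta[OF \<open>1 \<le> j\<close>, of "{\<theta><..}"] events_Theta[OF \<open>1 \<le> j\<close>, of "{\<theta> + h<..}"]
      by simp_all
    ultimately show ?thesis
      using \<open>\<not> a\<close> True gt identities(1) by (simp add: finite_measure_Diff bit_transition_def not_le)
  next
    case False
    have "{\<omega>\<in>space M. (\<Theta> j \<omega> \<le> \<theta>) = a \<and> (\<Theta> j \<omega> \<le> \<theta> + h) = b} = {\<omega>\<in>space M. \<theta> + h < \<Theta> j \<omega>}"
      using \<open>\<not> a\<close> False \<open>0 < h\<close> by auto
    then show ?thesis
      using \<open>\<not> a\<close> False gt identities(2) by (simp add: bit_transition_def not_le)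
  qed
qed

definition path_event :: "(real \<times> nat list) set \<Rightarrow> 'a set" where
  "path_event P = {\<omega>\<in>space M. \<forall>(\<tau>, c)\<in>P. comp_proc n \<Theta> \<tau> \<omega> = c}"

lemma path_event_in_events: "finite P \<Longrightarrow> path_event P \<in> events"
  unfolding path_event_def by (rule sets.sets_Collect_finite_All) (auto simp: pred_def[symmetric])

lemma AE_path_event_iff:
  assumes "\<forall>(\<tau>, c)\<in>P. 0 \<le> \<tau>"
  shows "AE \<omega> in M. \<omega> \<in> path_event P \<longleftrightarrow> (\<forall>j\<in>{1..n}. \<Theta> j \<omega> \<in> bit_event n P j)"
  using AE_Theta_1_nonpos AE_space
proof eventually_elim
  case (elim \<omega>)
  have "(case p of (\<tau>, c) \<Rightarrow> comp_proc n \<Theta> \<tau> \<omega> = c) \<longleftrightarrow>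
      (case p of (\<tau>, c) \<Rightarrow> is_composition n c \<and> (\<forall>j\<in>{1..n}. (\<Theta> j \<omega> \<le> \<tau>) = comp_bit c j))"
    if "p \<in> P" for p
  proof (cases p)
    case (Pair \<tau> c)
    with that assms have "0 \<le> \<tau>"
      by auto
    with elim have "\<Theta> 1 \<omega> \<le> \<tau>"
      by linarith
    then show ?thesis
      using Pair by (simp add: comp_proc_eq_iff[OF n_pos])
  qed
  then have "\<omega> \<in> path_event P \<longleftrightarrow>
      (\<forall>(\<tau>, c)\<in>P. is_composition n c \<and> (\<forall>j\<in>{1..n}. (\<Theta> j \<omega> \<le> \<tau>) = comp_bit c j))"
    using elim unfolding path_event_def by (simp cong: ball_cong)
  also have "\<dots> \<longleftrightarrow> (\<forall>j\<in>{1..n}. \<Theta> j \<omega> \<in> bit_event n P j)"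
    using n_pos by (auto simp: bit_event_def)
  finally show ?case .
qed

lemma prob_path_event:
  assumes "finite P" and "\<forall>(\<tau>, c)\<in>P. 0 \<le> \<tau>"
  shows "prob (path_event P) = (\<Prod>j\<in>{1..n}. prob {\<omega>\<in>space M. \<Theta> j \<omega> \<in> bit_event n P j})"
proof -
  let ?E = "\<lambda>j. \<Theta> j -` bit_event n P j \<inter> space M"
  have "?E j \<in> events" if "j \<in> {1..n}" for j
    using that assms(1) by (intro measurable_sets[OF borel_measurable_Theta] borel_bit_event) auto
  moreover have "AE \<omega> in M. \<omega> \<in> path_event P \<longleftrightarrow> \<omega> \<in> (\<Inter>j\<in>{1..n}. ?E j)"
    using AE_path_event_iff[OF assms(2)] AE_space by eventually_elim auto
  ultimately have "prob (path_event P) = prob (\<Inter>j\<in>{1..n}. ?E j)"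
    using assms(1) n_pos by (intro finite_measure_eq_AE path_event_in_events sets.finite_INT) auto
  also have "\<dots> = (\<Prod>j\<in>{1..n}. prob (?E j))"
    using indep_varsD[OF indep, of "{1..n}" "bit_event n P"] assms(1) n_pos
    by (simp add: borel_bit_event)
  finally show ?thesis
    by (simp add: vimage_def Int_def conj_commute)
qed

lemma prob_path_event_eq_0:
  assumes "finite P" "\<forall>(\<tau>, c)\<in>P. 0 \<le> \<tau>" "(\<tau>, c) \<in> P" "\<not> is_composition n c"
  shows "prob (path_event P) = 0"
proof -
  have "bit_event n P 1 = {}"
    using assms(3,4) by (auto simp: bit_event_def)
  then show ?thesis
    unfolding prob_path_event[OF assms(1,2)] using n_pos by (intro prod_zero bexI[of _ 1]) auto
qed

lemma prob_path_event_markov: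
  assumes "finite Q" "\<forall>(\<tau>, c)\<in>Q. 0 \<le> \<tau> \<and> \<tau> < s" "0 \<le> s" "s < t"
  shows "prob (path_event (Q \<union> {(s, x)} \<union> {(t, y)})) * prob (path_event {(s, x)})
    = prob (path_event (Q \<union> {(s, x)})) * prob (path_event ({(s, x)} \<union> {(t, y)}))"
proof -
  define p where "p j S = prob {\<omega>\<in>space M. \<Theta> j \<omega> \<in> S}" for j S
  define A where "A j = bit_event n Q j" for j
  define B where "B j = bit_event n {(s, x)} j" for j
  define C where "C j = bit_event n {(t, y)} j" for j
  have prob_path: "prob (path_event P) = (\<Prod>j\<in>{1..n}. p j (bit_event n P j))"
    if "P \<subseteq> Q \<union> {(s, x)} \<union> {(t, y)}" for P
    unfolding p_def using that assms by (intro prob_path_event) (auto intro: finite_subset)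
  have E1: "prob (path_event (Q \<union> {(s, x)} \<union> {(t, y)})) = (\<Prod>j\<in>{1..n}. p j (A j \<inter> B j \<inter> C j))"
    unfolding A_def B_def C_def bit_event_Un[symmetric] by (rule prob_path) simp
  have E2: "prob (path_event {(s, x)}) = (\<Prod>j\<in>{1..n}. p j (B j))"
    unfolding B_def by (rule prob_path) simp
  have E3: "prob (path_event (Q \<union> {(s, x)})) = (\<Prod>j\<in>{1..n}. p j (A j \<inter> B j))"
    unfolding A_def B_def bit_event_Un[symmetric] by (rule prob_path) auto
  have E4: "prob (path_event ({(s, x)} \<union> {(t, y)})) = (\<Prod>j\<in>{1..n}. p j (B j \<inter> C j))"
    unfolding B_def C_def bit_event_Un[symmetric] by (rule prob_path) auto
  have cross: "p j (A j \<inter> B j \<inter> C j) * p j (B j) = p j (A j \<inter> B j) * p j (B j \<inter> C j)" for j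
    unfolding A_def B_def C_def using assms(2,4)
    by (intro cond_indep_if_decides bit_event_decides) (auto simp: p_def)
  show ?thesis
    by (simp only: E1 E2 E3 E4 prod.distrib[symmetric] cross)
qed

lemma prob_path_event_step:
  assumes "is_composition n x" "is_composition n y" "0 \<le> \<theta>" "0 < h"
  shows "prob (path_event ({(\<theta>, x)} \<union> {(\<theta> + h, y)}))
    = (\<Prod>j\<in>{1..n}. bit_transition \<theta> j (comp_bit x j) (comp_bit y j) h) * prob (path_event {(\<theta>, x)})"
proof -
  have "prob (path_event ({(\<theta>, x)} \<union> {(\<theta> + h, y)}))
      = (\<Prod>j\<in>{1..n}. prob {\<omega>\<in>space M. \<Theta> j \<omega> \<in> bit_event n {(\<theta>, x)} j \<inter> bit_event n {(\<theta> + h, y)} j})"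
    unfolding bit_event_Un[symmetric] by (rule prob_path_event) (use assms in auto)
  also have "\<dots> = (\<Prod>j\<in>{1..n}. bit_transition \<theta> j (comp_bit x j) (comp_bit y j) h
      * prob {\<omega>\<in>space M. (\<Theta> j \<omega> \<le> \<theta>) = comp_bit x j})"
    by (intro prod.cong refl) (use assms in \<open>simp add: bit_event_singleton prob_bit_transition\<close>)
  also have "\<dots> = (\<Prod>j\<in>{1..n}. bit_transition \<theta> j (comp_bit x j) (comp_bit y j) h) * prob (path_event {(\<theta>, x)})"
    using prob_path_event[of "{(\<theta>, x)}"] assms by (simp add: prod.distrib bit_event_singleton)
  finally show ?thesis .
qed

lemma markov_process_on_comp_proc: "markov_process_on M {0..} (comp_proc n \<Theta>)"
  unfolding markov_process_on_def
proof (intro conjI ballI allI impI)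
  fix t :: real and x
  show "{\<omega>\<in>space M. comp_proc n \<Theta> t \<omega> = x} \<in> events"
    by measurable
next
  fix ts :: "real list" and xs :: "nat list list" and s t :: real and x y :: "nat list"
  assume H: "set ts \<subseteq> {0..} \<and> s \<in> {0..} \<and> t \<in> {0..} \<and> sorted_wrt (<) (ts @ [s, t])
    \<and> length xs = length ts"
  define Q where "Q = set (zip ts xs)"
  have "\<forall>\<tau>\<in>set ts. \<tau> < s" "s < t"
    using H by (simp_all add: sorted_wrt_append)
  then have Q_before: "\<forall>(\<tau>, c)\<in>Q. 0 \<le> \<tau> \<and> \<tau> < s"
    using H by (auto simp: Q_def dest: set_zip_leftD)
  have "Q = {(ts ! i, xs ! i) |i. i < length ts}"
    using H by (simp add: Q_def set_zip)
  then have Q_iff: "(\<forall>(\<tau>, c)\<in>Q. comp_proc n \<Theta> \<tau> \<omega> = c) \<longleftrightarrow> (\<forall>i<length ts. comp_proc n \<Theta> (ts!i) \<omega> = xs!i)"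
    for \<omega>
    by auto
  have events:
    "{\<omega>\<in>space M. (\<forall>i<length ts. comp_proc n \<Theta> (ts!i) \<omega> = xs!i) \<and> comp_proc n \<Theta> s \<omega> = x
        \<and> comp_proc n \<Theta> t \<omega> = y} = path_event (Q \<union> {(s, x)} \<union> {(t, y)})"
    "{\<omega>\<in>space M. (\<forall>i<length ts. comp_proc n \<Theta> (ts!i) \<omega> = xs!i) \<and> comp_proc n \<Theta> s \<omega> = x}
       = path_event (Q \<union> {(s, x)})"
    "{\<omega>\<in>space M. comp_proc n \<Theta> s \<omega> = x} = path_event {(s, x)}"
    "{\<omega>\<in>space M. comp_proc n \<Theta> s \<omega> = x \<and> comp_proc n \<Theta> t \<omega> = y} = path_event ({(s, x)} \<union> {(t, y)})"
    by (auto simp: path_event_def Q_iff[symmetric])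
  show "prob {\<omega>\<in>space M. (\<forall>i<length ts. comp_proc n \<Theta> (ts!i) \<omega> = xs!i) \<and> comp_proc n \<Theta> s \<omega> = x
        \<and> comp_proc n \<Theta> t \<omega> = y} * prob {\<omega>\<in>space M. comp_proc n \<Theta> s \<omega> = x}
    = prob {\<omega>\<in>space M. (\<forall>i<length ts. comp_proc n \<Theta> (ts!i) \<omega> = xs!i) \<and> comp_proc n \<Theta> s \<omega> = x}
        * prob {\<omega>\<in>space M. comp_proc n \<Theta> s \<omega> = x \<and> comp_proc n \<Theta> t \<omega> = y}"
    unfolding events using Q_before H \<open>s < t\<close>
    by (intro prob_path_event_markov) (auto simp: Q_def)
qed

lemma has_transition_rates_comp_proc: "has_transition_rates M {0..} (comp_proc n \<Theta>) (comp_rate n)"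
  unfolding has_transition_rates_def
proof (intro ballI allI impI)
  fix \<theta> :: real and x y :: "nat list"
  assume "\<theta> \<in> {0..}" and H: "x \<noteq> y \<and> 0 < prob {\<omega>\<in>space M. comp_proc n \<Theta> \<theta> \<omega> = x}"
  then have "0 \<le> \<theta>"
    by simp
  define E where "E h = path_event ({(\<theta>, x)} \<union> {(\<theta> + h, y)})" for h
  have start: "{\<omega>\<in>space M. comp_proc n \<Theta> \<theta> \<omega> = x} = path_event {(\<theta>, x)}"
    by (auto simp: path_event_def)
  have step: "{\<omega>\<in>space M. comp_proc n \<Theta> \<theta> \<omega> = x \<and> comp_proc n \<Theta> (\<theta> + h) \<omega> = y} = E h" for h
    by (auto simp: path_event_def E_def)
  have x: "is_composition n x"
  proof (rule ccontr)
    assume "\<not> is_composition n x"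
    then have "prob (path_event {(\<theta>, x)}) = 0"
      using \<open>0 \<le> \<theta>\<close> by (intro prob_path_event_eq_0[of _ \<theta> x]) auto
    then show False
      using H start by simp
  qed
  have "((\<lambda>h. prob (E h) / prob (path_event {(\<theta>, x)}) / h) \<longlongrightarrow> comp_rate n \<theta> x y) (at_right 0)"
  proof (cases "is_composition n y")
    case False
    then have "prob (E h) = 0" if "0 < h" for h
      unfolding E_def using that \<open>0 \<le> \<theta>\<close> by (intro prob_path_event_eq_0[of _ "\<theta> + h" y]) auto
    then have "\<forall>\<^sub>F h in at_right 0. 0 = prob (E h) / prob (path_event {(\<theta>, x)}) / h"
      using eventually_at_right_less[of "0::real"] by (auto elim: eventually_mono)
    with False show ?thesis
      by (simp add: comp_rate_def Lim_transform_eventually[OF tendsto_const])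
  next
    case True
    have "\<forall>\<^sub>F h in at_right 0. (\<Prod>j\<in>{1..n}. bit_transition \<theta> j (comp_bit x j) (comp_bit y j) h) / h
        = prob (E h) / prob (path_event {(\<theta>, x)}) / h"
      using eventually_at_right_less[of "0::real"]
      by eventually_elim (use H start prob_path_event_step[OF x True \<open>0 \<le> \<theta>\<close>] in \<open>simp add: E_def\<close>)
    with tendsto_prod_bit_transition_comp_rate[OF x True _ \<open>0 \<le> \<theta>\<close> n_pos] H show ?thesis
      by (blast intro: Lim_transform_eventually)
  qed
  then show "((\<lambda>h. prob {\<omega>\<in>space M. comp_proc n \<Theta> \<theta> \<omega> = x \<and> comp_proc n \<Theta> (\<theta> + h) \<omega> = y}
      / prob {\<omega>\<in>space M. comp_proc n \<Theta> \<theta> \<omega> = x} / h) \<longlongrightarrow> comp_rate n \<theta> x y) (at_right 0)"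
    unfolding start step .
qed

end

theorem corollary3:
  fixes M :: "'a measure" and \<Theta> :: "nat \<Rightarrow> 'a \<Rightarrow> real" and n :: nat
  assumes "prob_space M"
    and "prob_space.indep_vars M (\<lambda>_. borel) \<Theta> {1..}"
    and "\<And>j \<theta>. 1 \<le> j \<Longrightarrow> 0 \<le> \<theta> \<Longrightarrow> measure M {\<omega>\<in>space M. \<Theta> j \<omega> \<le> \<theta>} = theta_cdf j \<theta>"
    and "1 \<le> n"
  shows "markov_process_on M {0..} (comp_proc n \<Theta>)
         \<and> has_transition_rates M {0..} (comp_proc n \<Theta>) (comp_rate n)"
proof -
  interpret composition_process M \<Theta> n
    using assms by (simp add: composition_process_def composition_process_axioms_def)
  show ?thesis
    using markov_process_on_comp_proc has_transition_rates_comp_proc by simp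
qed

end
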